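(* Let $G$ be a connected 2-walk-regular graph that is neither bipartite nor complete multipartite. Then the canonical vector coloring of $G$ is locally injective.
   Context: With $A$ the adjacency matrix and $\circ$ the entrywise product, $G$ is 1-walk-regular if for all $\ell\in\mathbb{N}$ there are constants $a_\ell,b_\ell$ with $A^\ell\circ I=a_\ell I$ and $A^\ell\circ A=b_\ell A$; it is 2-walk-regular if additionally there are constants $c_\ell$ with $A^\ell\circ A_2=c_\ell A_2$ for all $\ell$, where $A_2$ is the adjacency matrix of the graph joining vertices at distance exactly 2 in $G$. Canonical vector coloring: for $G$ on $n$ vertices whose least adjacency eigenvalue has multiplicity $d$, take an $n\times d$ matrix $Q$ whose columns form an orthonormal basis of the least eigenspace and assign to vertex $i$ the vector $\sqrt{n/d}$ times the $i$-th row of $Q$. A vector assignment is locally injective if no two distinct vertices with a common neighbor receive the same vector. *)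

theory Defs
  imports "HOL-Analysis.Analysis"
begin

definition simple_graph :: "('n::finite \<Rightarrow> 'n \<Rightarrow> bool) \<Rightarrow> bool" where
  "simple_graph E \<longleftrightarrow> (\<forall>i j. E i j \<longrightarrow> E j i) \<and> (\<forall>i. \<not> E i i)"

definition adj_matrix :: "('n::finite \<Rightarrow> 'n \<Rightarrow> bool) \<Rightarrow> real^'n^'n" where
  "adj_matrix E = (\<chi> i j. if E i j then 1 else 0)"

definition dist2_matrix :: "('n::finite \<Rightarrow> 'n \<Rightarrow> bool) \<Rightarrow> real^'n^'n" where
  "dist2_matrix E = (\<chi> i j. if i \<noteq> j \<and> \<not> E i j \<and> (\<exists>k. E i k \<and> E k j) then 1 else 0)"

fun matpow :: "real^'n^'n \<Rightarrow> nat \<Rightarrow> real^'n^'n" where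
  "matpow M 0 = mat 1"
| "matpow M (Suc l) = M ** matpow M l"

definition hadamard :: "real^'n^'n \<Rightarrow> real^'n^'n \<Rightarrow> real^'n^'n" where
  "hadamard M N = (\<chi> i j. M $ i $ j * N $ i $ j)"

definition one_walk_regular :: "('n::finite \<Rightarrow> 'n \<Rightarrow> bool) \<Rightarrow> bool" where
  "one_walk_regular E \<longleftrightarrow>
     (\<forall>l. \<exists>a b. hadamard (matpow (adj_matrix E) l) (mat 1) = a *\<^sub>R mat 1
              \<and> hadamard (matpow (adj_matrix E) l) (adj_matrix E) = b *\<^sub>R adj_matrix E)"

definition two_walk_regular :: "('n::finite \<Rightarrow> 'n \<Rightarrow> bool) \<Rightarrow> bool" where
  "two_walk_regular E \<longleftrightarrow> one_walk_regular E \<and>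
     (\<forall>l. \<exists>c. hadamard (matpow (adj_matrix E) l) (dist2_matrix E) = c *\<^sub>R dist2_matrix E)"

definition connected_graph :: "('n::finite \<Rightarrow> 'n \<Rightarrow> bool) \<Rightarrow> bool" where
  "connected_graph E \<longleftrightarrow> (\<forall>i j. E\<^sup>*\<^sup>* i j)"

definition bipartite :: "('n::finite \<Rightarrow> 'n \<Rightarrow> bool) \<Rightarrow> bool" where
  "bipartite E \<longleftrightarrow> (\<exists>f :: 'n \<Rightarrow> bool. \<forall>i j. E i j \<longrightarrow> f i \<noteq> f j)"

text \<open>Complete multipartite: the vertex set is partitioned into parts (labelled by p)
  and two vertices are adjacent iff they lie in different parts.\<close>
definition complete_multipartite :: "('n::finite \<Rightarrow> 'n \<Rightarrow> bool) \<Rightarrow> bool" where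
  "complete_multipartite E \<longleftrightarrow> (\<exists>p :: 'n \<Rightarrow> 'n. \<forall>i j. E i j \<longleftrightarrow> p i \<noteq> p j)"

definition eigenvalues_of :: "real^'n^'n \<Rightarrow> real set" where
  "eigenvalues_of M = {c. \<exists>v. v \<noteq> 0 \<and> M *v v = c *\<^sub>R v}"

definition least_eigenvalue :: "real^'n^'n \<Rightarrow> real" where
  "least_eigenvalue M = Min (eigenvalues_of M)"

definition eigenspace_of :: "real^'n^'n \<Rightarrow> real \<Rightarrow> (real^'n) set" where
  "eigenspace_of M c = {v. M *v v = c *\<^sub>R v}"

text \<open>qs is a list of columns forming an orthonormal basis of the least eigenspace
  of the adjacency matrix (its length d is then the multiplicity).\<close>
definition least_eig_onb :: "('n::finite \<Rightarrow> 'n \<Rightarrow> bool) \<Rightarrow> (real^'n) list \<Rightarrow> bool" where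
  "least_eig_onb E qs \<longleftrightarrow>
     (\<forall>a < length qs. \<forall>b < length qs. (qs ! a) \<bullet> (qs ! b) = (if a = b then 1 else 0))
     \<and> span (set qs) = eigenspace_of (adj_matrix E) (least_eigenvalue (adj_matrix E))"

text \<open>Canonical vector colouring: vertex i gets sqrt(n/d) times the i-th row of Q.\<close>
definition canonical_coloring :: "(real^'n::finite) list \<Rightarrow> 'n \<Rightarrow> real list" where
  "canonical_coloring qs i =
     map (\<lambda>q. sqrt (real CARD('n) / real (length qs)) * q $ i) qs"

definition locally_injective :: "('n \<Rightarrow> 'n \<Rightarrow> bool) \<Rightarrow> ('n \<Rightarrow> 'v) \<Rightarrow> bool" where
  "locally_injective E f \<longleftrightarrow>
     (\<forall>i j. i \<noteq> j \<and> (\<exists>k. E i k \<and> E j k) \<longrightarrow> f i \<noteq> f j)"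

end

theory Submission
  imports Defs
begin

text \<open>The Gram matrix U = Q Q^T of the canonical coloring is the orthogonal projection onto
  the least eigenspace of the adjacency matrix A, hence a polynomial in A. Walk-regularity
  therefore makes U constant on the diagonal, on edges and on pairs at distance two, and since
  |x_i - x_j|^2 = U_ii - 2 U_ij + U_jj, two vertices receive the same vector exactly when U_ij
  equals the diagonal value. A collision on an edge would spread along all edges, making the
  least eigenvectors constant, which is impossible because a graph with an edge has least
  eigenvalue at most -1. A collision at distance two would spread to all pairs at distance
  two, and a proper coloring that is constant on such pairs forces a connected graph to be
  bipartite or complete multipartite.\<close>

section \<open>Symmetric matrices\<close>

lemma symmetric_matrix_inner:
  fixes A :: "real^'n^'n"
  assumes "transpose A = A"
  shows "x \<bullet> (A *v y) = (A *v x) \<bullet> y"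
  by (metis assms dot_lmul_matrix inner_commute transpose_matrix_vector)

lemma nonneg_quadratic_linear_coeff_zero:
  fixes a b :: real
  assumes "\<And>t. 0 \<le> 2*t*a + t^2*b"
  shows "a = 0"
proof (rule ccontr)
  assume "a \<noteq> 0"
  define c where "c = \<bar>b\<bar> + 1"
  have "c > 0" unfolding c_def by simp
  have "0 \<le> 2*(-a/c)*a + (-a/c)^2*b" by (rule assms)
  also have "\<dots> = a^2 * (b - 2*c) / c^2"
    using \<open>c > 0\<close> by (simp add: field_simps power2_eq_square)
  also have "\<dots> < 0" using \<open>a \<noteq> 0\<close> \<open>c > 0\<close> unfolding c_def
    by (intro divide_neg_pos mult_pos_neg) auto
  finally show False by simp
qed

lemma rayleigh_minimizer_exists:
  fixes A :: "real^'n^'n"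
  assumes "subspace Y" and "y \<in> Y" and "y \<noteq> 0"
  obtains x where "x \<in> Y" "x \<bullet> x = 1"
    "\<And>z. z \<in> Y \<Longrightarrow> (x \<bullet> (A *v x)) * (z \<bullet> z) \<le> z \<bullet> (A *v z)"
proof -
  define K where "K = Y \<inter> sphere 0 1"
  have "compact K"
    unfolding K_def using closed_subspace[OF assms(1)] compact_sphere by blast
  moreover have "(1 / norm y) *\<^sub>R y \<in> K"
    unfolding K_def using assms by (simp add: subspace_scale)
  moreover have "continuous_on K (\<lambda>z. z \<bullet> (A *v z))"
    by (intro continuous_on_inner continuous_on_id linear_continuous_on)
       (simp add: linear_conv_bounded_linear)
  ultimately obtain x where x: "x \<in> K" and min: "\<And>z. z \<in> K \<Longrightarrow> x \<bullet> (A *v x) \<le> z \<bullet> (A *v z)"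
    using continuous_attains_inf[of K "\<lambda>z. z \<bullet> (A *v z)"] by blast
  have "(x \<bullet> (A *v x)) * (z \<bullet> z) \<le> z \<bullet> (A *v z)" if "z \<in> Y" for z
  proof (cases "z = 0")
    case False
    have "(1 / norm z) *\<^sub>R z \<in> K"
      unfolding K_def using that False assms(1) by (simp add: subspace_scale)
    moreover have "((1 / norm z) *\<^sub>R z) \<bullet> (A *v ((1 / norm z) *\<^sub>R z)) = (z \<bullet> (A *v z)) / (norm z)^2"
      by (simp add: matrix_vector_mult_scaleR power2_eq_square)
    ultimately have "x \<bullet> (A *v x) \<le> (z \<bullet> (A *v z)) / (norm z)^2"
      using min by metis
    then show ?thesis
      using False by (simp add: pos_le_divide_eq dot_square_norm)
  qed simp
  moreover have "x \<in> Y" "x \<bullet> x = 1"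
    using x unfolding K_def by (auto simp: dot_square_norm)
  ultimately show thesis using that by blast
qed

text \<open>Perturbing the minimizer x in the direction w = A x - m x changes the Rayleigh
  numerator by 2 t |w|^2 + O(t^2), which can only stay nonnegative if w = 0.\<close>
lemma rayleigh_minimizer_eigenvector:
  fixes A :: "real^'n^'n"
  assumes sym: "transpose A = A" and "subspace Y" and inv: "\<And>y. y \<in> Y \<Longrightarrow> A *v y \<in> Y"
    and "x \<in> Y" "x \<bullet> x = 1"
    and min: "\<And>z. z \<in> Y \<Longrightarrow> (x \<bullet> (A *v x)) * (z \<bullet> z) \<le> z \<bullet> (A *v z)"
  shows "A *v x = (x \<bullet> (A *v x)) *\<^sub>R x"
proof -
  define m where "m = x \<bullet> (A *v x)"
  define w where "w = A *v x - m *\<^sub>R x"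
  have "w \<in> Y"
    unfolding w_def using assms by (simp add: subspace_diff subspace_scale)
  define G where "G = w \<bullet> (A *v w) - m * (w \<bullet> w)"
  have "0 \<le> 2*t*(w \<bullet> w) + t^2*G" for t
  proof -
    have "x + t *\<^sub>R w \<in> Y"
      using \<open>x \<in> Y\<close> \<open>w \<in> Y\<close> assms(2) by (simp add: subspace_add subspace_scale)
    then have "0 \<le> (x + t *\<^sub>R w) \<bullet> (A *v (x + t *\<^sub>R w)) - m * ((x + t *\<^sub>R w) \<bullet> (x + t *\<^sub>R w))"
      using min m_def by simp
    also have "\<dots> = 2*t*(w \<bullet> w) + t^2*G"
      using symmetric_matrix_inner[OF sym, of x w] \<open>x \<bullet> x = 1\<close>
      by (simp add: G_def w_def m_def algebra_simps inner_add_left inner_add_right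
          power2_eq_square inner_commute)
    finally show ?thesis .
  qed
  then have "w \<bullet> w = 0" by (rule nonneg_quadratic_linear_coeff_zero)
  then show ?thesis unfolding w_def m_def by simp
qed

lemma symmetric_invariant_subspace_eigenvector:
  fixes A :: "real^'n^'n"
  assumes "transpose A = A" and "subspace Y" and "\<And>y. y \<in> Y \<Longrightarrow> A *v y \<in> Y"
    and "y \<in> Y" and "y \<noteq> 0"
  obtains x \<mu> where "x \<in> Y" "x \<noteq> 0" "A *v x = \<mu> *\<^sub>R x"
    "\<And>z. z \<in> Y \<Longrightarrow> \<mu> * (z \<bullet> z) \<le> z \<bullet> (A *v z)"
proof -
  obtain x where "x \<in> Y" "x \<bullet> x = 1"
    and "\<And>z. z \<in> Y \<Longrightarrow> (x \<bullet> (A *v x)) * (z \<bullet> z) \<le> z \<bullet> (A *v z)"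
    using rayleigh_minimizer_exists[OF assms(2,4,5)] by blast
  moreover from this have "A *v x = (x \<bullet> (A *v x)) *\<^sub>R x"
    using rayleigh_minimizer_eigenvector assms(1-3) by blast
  moreover have "x \<noteq> 0" using \<open>x \<bullet> x = 1\<close> by auto
  ultimately show thesis using that by blast
qed

lemma symmetric_eigenvectors_orthogonal:
  fixes A :: "real^'n^'n"
  assumes "transpose A = A" "A *v v = \<mu> *\<^sub>R v" "A *v w = \<nu> *\<^sub>R w" "\<mu> \<noteq> \<nu>"
  shows "v \<bullet> w = 0"
proof -
  have "\<nu> * (v \<bullet> w) = v \<bullet> (A *v w)" using assms by simp
  also have "\<dots> = (A *v v) \<bullet> w" by (rule symmetric_matrix_inner[OF assms(1)])
  also have "\<dots> = \<mu> * (v \<bullet> w)" using assms by simp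
  finally show ?thesis using assms(4) by simp
qed

lemma finite_eigenvalues_symmetric:
  fixes A :: "real^'n^'n"
  assumes "transpose A = A"
  shows "finite (eigenvalues_of A)"
proof -
  define v where "v \<mu> = (SOME v. v \<noteq> 0 \<and> A *v v = \<mu> *\<^sub>R v)" for \<mu>
  have v: "v \<mu> \<noteq> 0" "A *v v \<mu> = \<mu> *\<^sub>R v \<mu>" if "\<mu> \<in> eigenvalues_of A" for \<mu>
    using someI_ex[of "\<lambda>v. v \<noteq> 0 \<and> A *v v = \<mu> *\<^sub>R v"] that
    unfolding v_def eigenvalues_of_def by auto
  have inj: "inj_on v (eigenvalues_of A)"
    by (rule inj_onI) (metis v scaleR_cancel_right)
  have "pairwise orthogonal (v ` eigenvalues_of A)"
    unfolding pairwise_def orthogonal_def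
    using v symmetric_eigenvectors_orthogonal[OF assms] by (metis imageE)
  then have "finite (v ` eigenvalues_of A)" by (rule pairwise_orthogonal_imp_finite)
  then show ?thesis by (rule finite_imageD[OF _ inj])
qed

text \<open>Spectral theorem: the orthogonal complement of the span of all eigenvectors is
  invariant, so it would contain an eigenvector if it were nonzero.\<close>
lemma span_eigenvectors_symmetric:
  fixes A :: "real^'n^'n"
  assumes sym: "transpose A = A"
  shows "span {v. \<exists>\<mu>. A *v v = \<mu> *\<^sub>R v} = UNIV"
proof (rule ccontr)
  define S where "S = span {v. \<exists>\<mu>. A *v v = \<mu> *\<^sub>R v}"
  assume "S \<noteq> UNIV"
  then have "dim S \<noteq> DIM(real^'n)"
    using dim_eq_full[of S] unfolding S_def span_span by simp
  then have "dim S < DIM(real^'n)"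
    using dim_subset_UNIV[of S] by linarith
  then obtain y where "y \<noteq> 0" and y: "\<And>s. s \<in> span S \<Longrightarrow> orthogonal y s"
    using orthogonal_to_subspace_exists by blast
  have AS: "A *v s \<in> S" if "s \<in> S" for s
  proof -
    have "A *v v \<in> {v. \<exists>\<mu>. A *v v = \<mu> *\<^sub>R v}" if "A *v v = \<mu> *\<^sub>R v" for v \<mu>
      using that by (auto simp: matrix_vector_mult_scaleR)
    then have "(*v) A ` {v. \<exists>\<mu>. A *v v = \<mu> *\<^sub>R v} \<subseteq> {v. \<exists>\<mu>. A *v v = \<mu> *\<^sub>R v}"
      by blast
    then have "(*v) A ` S \<subseteq> S"
      unfolding S_def linear_span_image[OF matrix_vector_mul_linear, symmetric]
      by (rule span_mono)
    then show ?thesis using that by blast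
  qed
  define X where "X = {x. \<forall>s\<in>S. orthogonal s x}"
  have invX: "A *v x \<in> X" if "x \<in> X" for x
  proof -
    have "orthogonal s (A *v x)" if "s \<in> S" for s
    proof -
      have "orthogonal (A *v s) x" using \<open>x \<in> X\<close> AS[OF that] unfolding X_def by blast
      then show ?thesis using symmetric_matrix_inner[OF sym, of s x] by (simp add: orthogonal_def)
    qed
    then show ?thesis unfolding X_def by blast
  qed
  have "subspace X"
    unfolding X_def by (rule subspace_orthogonal_to_vectors)
  have "y \<in> X"
    unfolding X_def using y[OF span_base] by (simp add: orthogonal_commute)
  obtain x \<mu> where "x \<in> X" "x \<noteq> 0" "A *v x = \<mu> *\<^sub>R x"
    using symmetric_invariant_subspace_eigenvector[OF sym \<open>subspace X\<close> invX \<open>y \<in> X\<close> \<open>y \<noteq> 0\<close>] .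
  then have "x \<in> S" unfolding S_def by (blast intro: span_base)
  then have "orthogonal x x" using \<open>x \<in> X\<close> unfolding X_def by blast
  then show False using \<open>x \<noteq> 0\<close> by (simp add: orthogonal_def)
qed

lemma least_eigenvalue_symmetric:
  fixes A :: "real^'n^'n"
  assumes sym: "transpose A = A"
  shows "least_eigenvalue A \<in> eigenvalues_of A"
    and "least_eigenvalue A * (z \<bullet> z) \<le> z \<bullet> (A *v z)"
proof -
  have "(1::real^'n) \<noteq> 0" by (simp add: vec_eq_iff)
  then obtain y \<mu> where "y \<noteq> 0" "A *v y = \<mu> *\<^sub>R y"
    and rayleigh: "\<And>z. \<mu> * (z \<bullet> z) \<le> z \<bullet> (A *v z)"
    using symmetric_invariant_subspace_eigenvector[OF sym subspace_UNIV, of 1] by auto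
  then have "\<mu> \<in> eigenvalues_of A" unfolding eigenvalues_of_def by blast
  have fin: "finite (eigenvalues_of A)" by (rule finite_eigenvalues_symmetric[OF sym])
  show "least_eigenvalue A \<in> eigenvalues_of A"
    unfolding least_eigenvalue_def using Min_in[OF fin] \<open>\<mu> \<in> eigenvalues_of A\<close> by blast
  have "least_eigenvalue A \<le> \<mu>"
    unfolding least_eigenvalue_def using Min_le[OF fin \<open>\<mu> \<in> eigenvalues_of A\<close>] .
  then show "least_eigenvalue A * (z \<bullet> z) \<le> z \<bullet> (A *v z)"
    using rayleigh[of z] mult_right_mono[OF _ inner_ge_zero[of z]] by (meson order_trans)
qed

section \<open>Polynomials in a matrix\<close>

definition poly_algebra :: "real^'n^'n \<Rightarrow> (real^'n^'n) set" where
  "poly_algebra A = span (range (matpow A))"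

lemma matpow_in_poly_algebra: "matpow A l \<in> poly_algebra A"
  unfolding poly_algebra_def by (simp add: span_base)

lemma matrix_add_rdistrib: "(B + C) ** A = B ** A + C ** A"
  by (vector matrix_matrix_mult_def sum.distrib[symmetric] field_simps)

lemma matpow_commute: "A ** matpow A l = matpow A l ** A"
  by (induction l) (simp_all add: matrix_mul_assoc)

lemma poly_algebra_mult_right:
  assumes "M \<in> poly_algebra A"
  shows "M ** A \<in> poly_algebra A"
  using assms unfolding poly_algebra_def
proof (induction rule: span_induct_alt)
  case base
  then show ?case by (simp add: span_zero)
next
  case (step c M' N)
  then obtain l where "M' = matpow A l" by blast
  then have "(c *\<^sub>R M' + N) ** A = c *\<^sub>R matpow A (Suc l) + N ** A"
    by (simp add: matrix_add_rdistrib scalar_matrix_assoc matpow_commute)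
  then show ?case
    using step matpow_in_poly_algebra[of A "Suc l"] unfolding poly_algebra_def
    by (metis span_add span_scale)
qed

lemma hadamard_span_scalar:
  assumes "\<And>M. M \<in> S \<Longrightarrow> \<exists>c. hadamard M B = c *\<^sub>R B" and "M \<in> span S"
  shows "\<exists>c. hadamard M B = c *\<^sub>R B"
  using assms(2)
proof (induction rule: span_induct_alt)
  case base
  show ?case by (rule exI[of _ 0]) (simp add: hadamard_def vec_eq_iff)
next
  case (step a M N)
  obtain c d where "hadamard M B = c *\<^sub>R B" "hadamard N B = d *\<^sub>R B"
    using assms(1) step by blast
  have "hadamard (a *\<^sub>R M + N) B = a *\<^sub>R hadamard M B + hadamard N B"
    by (simp add: hadamard_def vec_eq_iff algebra_simps)
  also have "\<dots> = (a * c + d) *\<^sub>R B"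
    using \<open>hadamard M B = c *\<^sub>R B\<close> \<open>hadamard N B = d *\<^sub>R B\<close> by (simp add: algebra_simps)
  finally show ?case by blast
qed

lemma hadamard_scalar_entry:
  assumes "hadamard M B = c *\<^sub>R B" and "B$i$j = 1"
  shows "M$i$j = c"
  using arg_cong[OF assms(1), of "\<lambda>N. N$i$j"] assms(2) by (simp add: hadamard_def)

section \<open>The projection onto an eigenspace\<close>

text \<open>A polynomial in A acting as the identity on the \<theta>-eigenvectors and annihilating the
  \<mu>-eigenvectors for \<mu> \<in> T: the Lagrange-type product of the factors (A - \<mu> I) / (\<theta> - \<mu>).\<close>
lemma poly_algebra_eigen_selector:
  fixes A :: "real^'n^'n"
  assumes "finite T" and "\<theta> \<notin> T"
  shows "\<exists>P\<in>poly_algebra A. (\<forall>v. A *v v = \<theta> *\<^sub>R v \<longrightarrow> P *v v = v) \<and>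
           (\<forall>\<mu>\<in>T. \<forall>v. A *v v = \<mu> *\<^sub>R v \<longrightarrow> P *v v = 0)"
  using assms
proof (induction T rule: finite_induct)
  case empty
  show ?case using matpow_in_poly_algebra[of A 0] by (intro bexI[of _ "mat 1"]) auto
next
  case (insert \<mu> T)
  then obtain P where P: "P \<in> poly_algebra A" "\<forall>v. A *v v = \<theta> *\<^sub>R v \<longrightarrow> P *v v = v"
     "\<forall>\<nu>\<in>T. \<forall>v. A *v v = \<nu> *\<^sub>R v \<longrightarrow> P *v v = 0" by auto
  define P' where "P' = (1/(\<theta>-\<mu>)) *\<^sub>R (P ** A) - (\<mu>/(\<theta>-\<mu>)) *\<^sub>R P"
  have P'v: "P' *v v = (1/(\<theta>-\<mu>)) *\<^sub>R (P *v (A *v v)) - (\<mu>/(\<theta>-\<mu>)) *\<^sub>R (P *v v)" for v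
    unfolding P'_def
    by (simp add: matrix_vector_mult_diff_rdistrib scaleR_matrix_vector_assoc[symmetric]
        matrix_vector_mul_assoc)
  have "P' \<in> poly_algebra A"
    using poly_algebra_mult_right[OF P(1)] P(1) unfolding P'_def poly_algebra_def
    by (intro span_diff span_scale)
  moreover have "P' *v v = v" if "A *v v = \<theta> *\<^sub>R v" for v
  proof -
    have "\<theta> \<noteq> \<mu>" using insert by auto
    have "P' *v v = (\<theta>/(\<theta>-\<mu>) - \<mu>/(\<theta>-\<mu>)) *\<^sub>R v"
      unfolding P'v using P(2) that by (simp add: matrix_vector_mult_scaleR algebra_simps)
    also have "\<theta>/(\<theta>-\<mu>) - \<mu>/(\<theta>-\<mu>) = 1"
      using \<open>\<theta> \<noteq> \<mu>\<close> by (simp add: diff_divide_distrib[symmetric])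
    finally show ?thesis by simp
  qed
  moreover have "P' *v v = 0" if "\<nu> \<in> insert \<mu> T" "A *v v = \<nu> *\<^sub>R v" for \<nu> v
  proof (cases "\<nu> = \<mu>")
    case False
    then have "P *v v = 0" using P(3) that by auto
    then show ?thesis unfolding P'v that(2) by (simp add: matrix_vector_mult_scaleR)
  qed (simp add: P'v that(2) matrix_vector_mult_scaleR)
  ultimately show ?case by blast
qed

definition orthonormal_list :: "(real^'n) list \<Rightarrow> bool" where
  "orthonormal_list qs \<longleftrightarrow>
     (\<forall>a < length qs. \<forall>b < length qs. (qs ! a) \<bullet> (qs ! b) = (if a = b then 1 else 0))"

definition proj_matrix :: "(real^'n) list \<Rightarrow> real^'n^'n" where
  "proj_matrix qs = (\<chi> i j. \<Sum>a<length qs. qs!a$i * qs!a$j)"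

lemma proj_matrix_mult_vec:
  "proj_matrix qs *v v = (\<Sum>a<length qs. (qs!a \<bullet> v) *\<^sub>R qs!a)"
  by (simp add: vec_eq_iff proj_matrix_def matrix_vector_mult_def inner_vec_def
      sum_distrib_left sum_distrib_right sum.swap[of _ "{..<length qs}"] mult_ac)

lemma proj_matrix_fixes_span:
  assumes "orthonormal_list qs" and "v \<in> span (set qs)"
  shows "proj_matrix qs *v v = v"
proof -
  have "proj_matrix qs *v q = q" if "q \<in> set qs" for q
  proof -
    obtain b where "b < length qs" "q = qs!b" using \<open>q \<in> set qs\<close> by (metis in_set_conv_nth)
    then have "(\<Sum>a<length qs. (qs!a \<bullet> q) *\<^sub>R qs!a) = (\<Sum>a<length qs. if a = b then q else 0)"
      using assms(1) unfolding orthonormal_list_def by (intro sum.cong) auto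
    then show ?thesis using \<open>b < length qs\<close> by (simp add: proj_matrix_mult_vec)
  qed
  then show ?thesis
    using linear_eq_on_span[OF matrix_vector_mul_linear linear_id, of "set qs"] assms(2) by simp
qed

lemma proj_matrix_kills_orthogonal:
  assumes "\<And>q. q \<in> set qs \<Longrightarrow> q \<bullet> v = 0"
  shows "proj_matrix qs *v v = 0"
  using assms by (simp add: proj_matrix_mult_vec)

text \<open>Q Q^T coincides with the eigen-selector polynomial on every eigenvector, and
  eigenvectors span the whole space.\<close>
lemma proj_matrix_in_poly_algebra:
  fixes A :: "real^'n^'n"
  assumes sym: "transpose A = A" and "orthonormal_list qs"
    and span_qs: "span (set qs) = eigenspace_of A \<theta>"
  shows "proj_matrix qs \<in> poly_algebra A"
proof -
  have "finite (eigenvalues_of A - {\<theta>})"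
    using finite_eigenvalues_symmetric[OF sym] by simp
  then obtain P where "P \<in> poly_algebra A"
    and P_fix: "\<And>v. A *v v = \<theta> *\<^sub>R v \<Longrightarrow> P *v v = v"
    and P_kill: "\<And>\<mu> v. \<mu> \<in> eigenvalues_of A - {\<theta>} \<Longrightarrow> A *v v = \<mu> *\<^sub>R v \<Longrightarrow> P *v v = 0"
    using poly_algebra_eigen_selector[of "eigenvalues_of A - {\<theta>}" \<theta> A] by blast
  have "proj_matrix qs *v v = P *v v" if "A *v v = \<mu> *\<^sub>R v" for v \<mu>
  proof (cases "\<mu> = \<theta>")
    case True
    then have "v \<in> span (set qs)" using span_qs that unfolding eigenspace_of_def by simp
    then show ?thesis
      using proj_matrix_fixes_span[OF \<open>orthonormal_list qs\<close>] P_fix that True by simp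
  next
    case False
    have "proj_matrix qs *v v = 0"
    proof (rule proj_matrix_kills_orthogonal)
      fix q assume "q \<in> set qs"
      then have "A *v q = \<theta> *\<^sub>R q"
        using span_qs span_base unfolding eigenspace_of_def by blast
      then show "q \<bullet> v = 0"
        using symmetric_eigenvectors_orthogonal[OF sym _ that] False by blast
    qed
    moreover have "v = 0 \<or> \<mu> \<in> eigenvalues_of A"
      using that unfolding eigenvalues_of_def by blast
    ultimately show ?thesis using P_kill[of \<mu> v] that False by auto
  qed
  then have "proj_matrix qs *v v = P *v v" for v
    using linear_eq_on_span[OF matrix_vector_mul_linear matrix_vector_mul_linear,
        of "{v. \<exists>\<mu>. A *v v = \<mu> *\<^sub>R v}"] span_eigenvectors_symmetric[OF sym] by blast
  then show ?thesis using \<open>P \<in> poly_algebra A\<close> matrix_eq by metis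
qed

lemma proj_matrix_eq_diag_iff:
  assumes diag: "\<And>i. proj_matrix qs $ i $ i = \<alpha>"
  shows "proj_matrix qs $ i $ j = \<alpha> \<longleftrightarrow> (\<forall>a<length qs. qs!a$i = qs!a$j)"
proof -
  let ?U = "proj_matrix qs"
  have "(\<Sum>a<length qs. (qs!a$i - qs!a$j)^2) = ?U$i$i - 2 * ?U$i$j + ?U$j$j"
    by (simp add: proj_matrix_def power2_eq_square algebra_simps sum.distrib sum_subtractf
        sum_distrib_left)
  also have "\<dots> = 2 * (\<alpha> - ?U$i$j)" using diag by simp
  finally have "?U$i$j = \<alpha> \<longleftrightarrow> (\<forall>a\<in>{..<length qs}. (qs!a$i - qs!a$j)^2 = 0)"
    by (subst sum_nonneg_eq_0_iff[symmetric]) auto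
  then show ?thesis by auto
qed

section \<open>Proper colorings constant at distance two\<close>

locale dist2_coloring =
  fixes E :: "'n::finite \<Rightarrow> 'n \<Rightarrow> bool" and g :: "'n \<Rightarrow> 'c"
  assumes sym: "E i j \<Longrightarrow> E j i"
    and connected: "E\<^sup>*\<^sup>* i j"
    and proper: "E i j \<Longrightarrow> g i \<noteq> g j"
    and dist2: "i \<noteq> j \<Longrightarrow> \<not> E i j \<Longrightarrow> E i k \<Longrightarrow> E k j \<Longrightarrow> g i = g j"
begin

lemma monochromatic_neighborhood_flip:
  assumes mono: "\<forall>s. E w s \<longrightarrow> g s = c" and "E w w'"
  shows "g w' = c" and "\<forall>s. E w' s \<longrightarrow> g s = g w"
proof -
  show "g w' = c" using mono \<open>E w w'\<close> by blast
  show "\<forall>s. E w' s \<longrightarrow> g s = g w"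
  proof (intro allI impI)
    fix s assume "E w' s"
    consider "s = w" | "E w s" | "s \<noteq> w" "\<not> E w s" by blast
    then show "g s = g w"
    proof cases
      case 2
      then have "g s = g w'" using mono \<open>E w w'\<close> by simp
      then show ?thesis using proper[OF \<open>E w' s\<close>] by simp
    next
      case 3
      then show ?thesis using dist2[OF _ _ \<open>E w w'\<close> \<open>E w' s\<close>] by simp
    qed simp
  qed
qed

lemma bipartite_if_monochromatic_neighborhood:
  assumes "E u a" and mono: "\<forall>s. E u s \<longrightarrow> g s = g a"
  shows "bipartite E"
proof -
  define two_colored where "two_colored w \<longleftrightarrow>
      (g w = g u \<and> (\<forall>s. E w s \<longrightarrow> g s = g a)) \<or> (g w = g a \<and> (\<forall>s. E w s \<longrightarrow> g s = g u))"
    for w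
  have two_colored: "two_colored w" for w
    using connected[of u w]
  proof (induction rule: rtranclp_induct)
    case base
    then show ?case using mono unfolding two_colored_def by simp
  next
    case (step w w')
    from step.IH consider
        (left) "g w = g u" "\<forall>s. E w s \<longrightarrow> g s = g a"
      | (right) "g w = g a" "\<forall>s. E w s \<longrightarrow> g s = g u"
      unfolding two_colored_def by blast
    then show ?case
    proof cases
      case left
      then show ?thesis using monochromatic_neighborhood_flip[OF left(2) \<open>E w w'\<close>]
        by (simp add: two_colored_def)
    next
      case right
      then show ?thesis using monochromatic_neighborhood_flip[OF right(2) \<open>E w w'\<close>]
        by (simp add: two_colored_def)
    qed
  qed
  have "(g i = g u) \<noteq> (g j = g u)" if "E i j" for i j
  proof -
    consider "g i = g u" "\<forall>s. E i s \<longrightarrow> g s = g a" | "g i = g a" "\<forall>s. E i s \<longrightarrow> g s = g u"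
      using two_colored[of i] unfolding two_colored_def by blast
    then show ?thesis
    proof cases
      case 1
      then have "g j = g a" using \<open>E i j\<close> by blast
      then show ?thesis using 1 proper[OF \<open>E u a\<close>] by simp
    next
      case 2
      then have "g j = g u" using \<open>E i j\<close> by blast
      then show ?thesis using 2 proper[OF \<open>E u a\<close>] by simp
    qed
  qed
  then show ?thesis unfolding bipartite_def by (intro exI[of _ "\<lambda>w. g w = g u"]) blast
qed

text \<open>A neighbor c of a whose color differs from that of u would have to be adjacent to u, b
  and v, putting u and v at distance two.\<close>
lemma induced_path_monochromatic_neighborhood:
  assumes "E u a" "E a b" "E b v" and "u \<noteq> b" "\<not> E u b" and "a \<noteq> v" "\<not> E a v"
    and "u \<noteq> v" "\<not> E u v" and "g u \<noteq> g v" and "E a c"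
  shows "g c = g u"
proof (rule ccontr)
  assume c: "g c \<noteq> g u"
  have "g u = g b" using dist2[OF \<open>u \<noteq> b\<close> \<open>\<not> E u b\<close> \<open>E u a\<close> \<open>E a b\<close>] .
  have "g a = g v" using dist2[OF \<open>a \<noteq> v\<close> \<open>\<not> E a v\<close> \<open>E a b\<close> \<open>E b v\<close>] .
  have "E c u"
    using dist2[OF _ _ sym[OF \<open>E a c\<close>] sym[OF \<open>E u a\<close>]] c by fastforce
  moreover have "E c b"
    using dist2[OF _ _ sym[OF \<open>E a c\<close>] \<open>E a b\<close>] c \<open>g u = g b\<close> by fastforce
  then have "E c v"
    using dist2[OF _ _ \<open>E c b\<close> \<open>E b v\<close>] proper[OF \<open>E a c\<close>] \<open>g a = g v\<close> by fastforce
  ultimately have "g u = g v"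
    using dist2[OF \<open>u \<noteq> v\<close> \<open>\<not> E u v\<close> sym[OF \<open>E c u\<close>]] by blast
  with \<open>g u \<noteq> g v\<close> show False by contradiction
qed

lemma nonadjacent_same_color_walk:
  assumes no_mono: "\<And>x y. E x y \<Longrightarrow> \<exists>s. E x s \<and> g s \<noteq> g y"
  shows "(E ^^ n) u v \<Longrightarrow> u \<noteq> v \<Longrightarrow> \<not> E u v \<Longrightarrow> g u = g v"
proof (induction n arbitrary: u v rule: less_induct)
  case (less n)
  have "n \<noteq> 0" using less.prems relpowp_0_E by metis
  moreover have "n \<noteq> 1" using less.prems by auto
  ultimately obtain m where n: "n = Suc (Suc m)" by (metis One_nat_def not0_implies_Suc)
  then obtain p1 p2 where "E u p1" "E p1 p2" and walk: "(E ^^ m) p2 v"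
    using less.prems(1) by (metis relpowp_Suc_D2)
  consider "p2 = u" | "E u p2" | "p2 \<noteq> u" "\<not> E u p2" by blast
  then show ?case
  proof cases
    case 1
    then show ?thesis using less.IH[of m u v] walk less.prems n by simp
  next
    case 2
    then have "(E ^^ Suc m) u v" using walk by (rule relpowp_Suc_I2)
    then show ?thesis using less.IH[of "Suc m"] less.prems n by blast
  next
    case 3
    then have "g u = g p2" using dist2[OF _ _ \<open>E u p1\<close> \<open>E p1 p2\<close>] by blast
    consider "p2 = v" | "p2 \<noteq> v" "\<not> E p2 v" | "E p1 v" | "E p2 v" "\<not> E p1 v" by blast
    then show ?thesis
    proof cases
      case 2
      then show ?thesis using less.IH[of m] walk n \<open>g u = g p2\<close> by auto
    next
      case 3
      then show ?thesis using dist2[OF _ _ \<open>E u p1\<close>] less.prems by blast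
    next
      case 4
      have "p1 \<noteq> v" using \<open>E u p1\<close> less.prems by blast
      obtain s where "E p1 s" "g s \<noteq> g u" using no_mono sym[OF \<open>E u p1\<close>] by blast
      then show ?thesis
        using induced_path_monochromatic_neighborhood[OF \<open>E u p1\<close> \<open>E p1 p2\<close> \<open>E p2 v\<close>]
          3 4 \<open>p1 \<noteq> v\<close> less.prems by blast
    qed (use \<open>g u = g p2\<close> in simp)
  qed
qed

lemma bipartite_or_complete_multipartite: "bipartite E \<or> complete_multipartite E"
proof (cases "\<exists>x y. E x y \<and> (\<forall>s. E x s \<longrightarrow> g s = g y)")
  case True
  then show ?thesis using bipartite_if_monochromatic_neighborhood by blast
next
  case False
  then have no_mono: "\<exists>s. E x s \<and> g s \<noteq> g y" if "E x y" for x y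
    using that by blast
  have same: "g u = g v" if "u \<noteq> v" "\<not> E u v" for u v
  proof -
    obtain n where "(E ^^ n) u v" using rtranclp_imp_relpowp[OF connected[of u v]] ..
    then show ?thesis using nonadjacent_same_color_walk[OF no_mono] that by blast
  qed
  define p where "p i = (SOME j. g j = g i)" for i
  have g_p: "g (p i) = g i" for i
    unfolding p_def by (rule someI) (rule refl)
  have "p i = p j \<longleftrightarrow> g i = g j" for i j
  proof
    show "p i = p j \<Longrightarrow> g i = g j" using g_p by metis
    show "g i = g j \<Longrightarrow> p i = p j" unfolding p_def by simp
  qed
  moreover have "E i j \<longleftrightarrow> g i \<noteq> g j" for i j
    using proper[of i j] same[of i j] by blast
  ultimately have "complete_multipartite E"
    unfolding complete_multipartite_def by (intro exI[of _ p]) simp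
  then show ?thesis ..
qed

end

section \<open>The canonical vector coloring\<close>

lemma least_eig_onb_iff:
  "least_eig_onb E qs \<longleftrightarrow> orthonormal_list qs \<and>
     span (set qs) = eigenspace_of (adj_matrix E) (least_eigenvalue (adj_matrix E))"
  unfolding least_eig_onb_def orthonormal_list_def ..

lemma transpose_adj_matrix:
  assumes "simple_graph E"
  shows "transpose (adj_matrix E) = adj_matrix E"
  using assms unfolding simple_graph_def adj_matrix_def transpose_def by (auto simp: vec_eq_iff)

lemma least_eigenvalue_adj_matrix_le:
  fixes E :: "'n::finite \<Rightarrow> 'n \<Rightarrow> bool"
  assumes "simple_graph E" and "E i k"
  shows "least_eigenvalue (adj_matrix E) \<le> -1"
proof -
  define z :: "real^'n" where "z = axis i 1 - axis k 1"
  have "\<not> E i i" "\<not> E k k" "E k i" using assms unfolding simple_graph_def by auto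
  then have "i \<noteq> k" using assms(2) by auto
  then have "z \<bullet> z = 2"
    unfolding z_def by (simp add: inner_diff_left inner_diff_right inner_axis_axis)
  moreover have "z \<bullet> (adj_matrix E *v z) = -2"
    unfolding z_def using \<open>\<not> E i i\<close> \<open>\<not> E k k\<close> \<open>E k i\<close> assms(2)
    by (simp add: inner_diff_left matrix_vector_mult_diff_distrib inner_axis'
        matrix_vector_mult_basis column_def adj_matrix_def)
  ultimately show ?thesis
    using least_eigenvalue_symmetric(2)[OF transpose_adj_matrix[OF assms(1)], of z] by simp
qed

lemma adj_matrix_constant_eigenvector_nonneg:
  assumes "adj_matrix E *v q = \<mu> *\<^sub>R q" and "q \<noteq> 0" and const: "\<And>j. q$j = q$i"
  shows "0 \<le> \<mu>"
proof -
  have "q$i \<noteq> 0"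
  proof
    assume "q$i = 0"
    then have "q = 0" using const by (simp add: vec_eq_iff)
    with \<open>q \<noteq> 0\<close> show False ..
  qed
  have "\<mu> * q$i = (adj_matrix E *v q)$i" using assms(1) by simp
  also have "\<dots> = (\<Sum>j\<in>UNIV. adj_matrix E$i$j * q$i)"
    unfolding matrix_vector_mult_def vec_lambda_beta
    by (rule sum.cong[OF refl], subst const, rule refl)
  also have "\<dots> = (\<Sum>j\<in>UNIV. adj_matrix E$i$j) * q$i"
    by (simp add: sum_distrib_right)
  finally have "\<mu> = (\<Sum>j\<in>UNIV. adj_matrix E$i$j)" using \<open>q$i \<noteq> 0\<close> by simp
  then show ?thesis by (simp add: adj_matrix_def sum_nonneg)
qed

lemma least_eig_onb_nonempty:
  assumes "simple_graph E" and "least_eig_onb E qs"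
  shows "qs \<noteq> []"
proof
  assume "qs = []"
  let ?A = "adj_matrix E"
  obtain v where "v \<noteq> 0" "?A *v v = least_eigenvalue ?A *\<^sub>R v"
    using least_eigenvalue_symmetric(1)[OF transpose_adj_matrix[OF assms(1)]]
    unfolding eigenvalues_of_def by blast
  moreover have "eigenspace_of ?A (least_eigenvalue ?A) = {0}"
    using assms(2) \<open>qs = []\<close> unfolding least_eig_onb_iff by simp
  ultimately show False unfolding eigenspace_of_def by blast
qed

lemma canonical_coloring_eq_iff:
  fixes qs :: "(real^'n::finite) list"
  assumes "qs \<noteq> []"
  shows "canonical_coloring qs i = canonical_coloring qs j \<longleftrightarrow> (\<forall>a<length qs. qs!a$i = qs!a$j)"
proof -
  define s where "s = sqrt (real CARD('n) / real (length qs))"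
  have "s > 0" unfolding s_def using assms by simp
  have "canonical_coloring qs x = map (\<lambda>q. s * q $ x) qs" for x
    unfolding canonical_coloring_def s_def ..
  then show ?thesis using \<open>s > 0\<close> by (simp add: list_eq_iff_nth_eq)
qed

lemma walk_regular_proj_matrix:
  assumes "simple_graph E" and "two_walk_regular E" and "least_eig_onb E qs"
  obtains \<alpha> \<beta> \<gamma> where "\<And>i. proj_matrix qs $ i $ i = \<alpha>"
    and "\<And>i j. E i j \<Longrightarrow> proj_matrix qs $ i $ j = \<beta>"
    and "\<And>i j k. i \<noteq> j \<Longrightarrow> \<not> E i j \<Longrightarrow> E i k \<Longrightarrow> E k j \<Longrightarrow> proj_matrix qs $ i $ j = \<gamma>"
proof -
  let ?A = "adj_matrix E"
  have "proj_matrix qs \<in> span (range (matpow ?A))"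
    using proj_matrix_in_poly_algebra[OF transpose_adj_matrix[OF assms(1)]] assms(3)
    unfolding least_eig_onb_iff poly_algebra_def by blast
  then have scalar: "\<exists>c. hadamard (proj_matrix qs) B = c *\<^sub>R B"
    if "\<forall>l. \<exists>c. hadamard (matpow ?A l) B = c *\<^sub>R B" for B
    using hadamard_span_scalar[of "range (matpow ?A)" B] that by blast
  have walks: "\<forall>l. \<exists>c. hadamard (matpow ?A l) (mat 1) = c *\<^sub>R mat 1"
      "\<forall>l. \<exists>c. hadamard (matpow ?A l) ?A = c *\<^sub>R ?A"
      "\<forall>l. \<exists>c. hadamard (matpow ?A l) (dist2_matrix E) = c *\<^sub>R dist2_matrix E"
    using assms(2) unfolding two_walk_regular_def one_walk_regular_def by blast+
  obtain \<alpha> \<beta> \<gamma> where "hadamard (proj_matrix qs) (mat 1) = \<alpha> *\<^sub>R mat 1"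
    and "hadamard (proj_matrix qs) ?A = \<beta> *\<^sub>R ?A"
    and "hadamard (proj_matrix qs) (dist2_matrix E) = \<gamma> *\<^sub>R dist2_matrix E"
    using scalar[OF walks(1)] scalar[OF walks(2)] scalar[OF walks(3)] by blast
  note entry = hadamard_scalar_entry[OF this(1)] hadamard_scalar_entry[OF this(2)]
    hadamard_scalar_entry[OF this(3)]
  show thesis
  proof (rule that)
    show "proj_matrix qs $ i $ i = \<alpha>" for i
      using entry(1) by (simp add: mat_def)
    show "proj_matrix qs $ i $ j = \<beta>" if "E i j" for i j
      using entry(2) that by (simp add: adj_matrix_def)
    show "proj_matrix qs $ i $ j = \<gamma>" if "i \<noteq> j" "\<not> E i j" "E i k" "E k j" for i j k
    proof -
      have "dist2_matrix E $ i $ j = 1" using that unfolding dist2_matrix_def by auto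
      then show ?thesis by (rule entry(3))
    qed
  qed
qed

lemma canonical_coloring_not_constant:
  assumes "simple_graph E" and "least_eig_onb E qs" and "E i k"
  shows "\<exists>u v. canonical_coloring qs u \<noteq> canonical_coloring qs v"
proof (rule ccontr)
  let ?A = "adj_matrix E" and ?q = "qs ! 0"
  assume all_equal: "\<nexists>u v. canonical_coloring qs u \<noteq> canonical_coloring qs v"
  have "qs \<noteq> []" using least_eig_onb_nonempty[OF assms(1,2)] .
  have "?A *v ?q = least_eigenvalue ?A *\<^sub>R ?q"
    using assms(2) \<open>qs \<noteq> []\<close> span_base[of ?q "set qs"]
    unfolding least_eig_onb_iff eigenspace_of_def by auto
  moreover have "?q \<noteq> 0"
  proof
    assume "?q = 0"
    moreover have "?q \<bullet> ?q = 1"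
      using assms(2) \<open>qs \<noteq> []\<close> unfolding least_eig_onb_iff orthonormal_list_def by simp
    ultimately show False by simp
  qed
  moreover have "?q$j = ?q$i" for j
    using all_equal canonical_coloring_eq_iff[OF \<open>qs \<noteq> []\<close>] \<open>qs \<noteq> []\<close> by blast
  ultimately have "0 \<le> least_eigenvalue ?A" by (rule adj_matrix_constant_eigenvector_nonneg)
  then show False using least_eigenvalue_adj_matrix_le[OF assms(1,3)] by simp
qed

lemma constant_on_edges_imp_constant:
  assumes "connected_graph E" and "\<And>u v. E u v \<Longrightarrow> f u = f v"
  shows "f i = f j"
  using assms(1) unfolding connected_graph_def
proof -
  assume "\<forall>i j. E\<^sup>*\<^sup>* i j"
  then have "E\<^sup>*\<^sup>* i j" by blast
  then show ?thesis by (induction rule: rtranclp_induct) (use assms(2) in auto)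
qed

theorem lemma4p10:
  fixes E :: "'n::finite \<Rightarrow> 'n \<Rightarrow> bool" and qs :: "(real^'n) list"
  assumes "simple_graph E"
    and "connected_graph E"
    and "two_walk_regular E"
    and "\<not> bipartite E"
    and "\<not> complete_multipartite E"
    and "least_eig_onb E qs"
  shows "locally_injective E (canonical_coloring qs)"
proof -
  let ?U = "proj_matrix qs" and ?c = "canonical_coloring qs"
  obtain \<alpha> \<beta> \<gamma> where diag: "\<And>i. ?U$i$i = \<alpha>" and edge: "\<And>i j. E i j \<Longrightarrow> ?U$i$j = \<beta>"
    and dist2: "\<And>i j k. i \<noteq> j \<Longrightarrow> \<not> E i j \<Longrightarrow> E i k \<Longrightarrow> E k j \<Longrightarrow> ?U$i$j = \<gamma>"
    using walk_regular_proj_matrix[OF assms(1,3,6)] by blast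
  have same_iff: "?c i = ?c j \<longleftrightarrow> ?U$i$j = \<alpha>" for i j
    using canonical_coloring_eq_iff[OF least_eig_onb_nonempty[OF assms(1,6)]]
      proj_matrix_eq_diag_iff[OF diag] by simp
  have sym: "E j i" if "E i j" for i j using assms(1) that unfolding simple_graph_def by blast
  have proper: "?c i \<noteq> ?c j" if "E i j" for i j
  proof
    assume "?c i = ?c j"
    then have "\<beta> = \<alpha>" using same_iff edge[OF \<open>E i j\<close>] by simp
    then have "?c u = ?c v" if "E u v" for u v using same_iff edge[OF that] by simp
    then have "?c u = ?c v" for u v by (rule constant_on_edges_imp_constant[OF assms(2)])
    then show False using canonical_coloring_not_constant[OF assms(1,6) \<open>E i j\<close>] by blast
  qed
  show ?thesis unfolding locally_injective_def
  proof (intro allI impI notI)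
    fix i j assume "i \<noteq> j \<and> (\<exists>k. E i k \<and> E j k)" and "?c i = ?c j"
    then obtain k where "i \<noteq> j" "E i k" "E k j" using sym by blast
    moreover have "\<not> E i j" using proper \<open>?c i = ?c j\<close> by blast
    ultimately have "\<gamma> = \<alpha>" using dist2 same_iff \<open>?c i = ?c j\<close> by simp
    interpret dist2_coloring E ?c
    proof
      show "E u v \<Longrightarrow> E v u" for u v by (rule sym)
      show "E\<^sup>*\<^sup>* u v" for u v using assms(2) unfolding connected_graph_def by blast
      show "E u v \<Longrightarrow> ?c u \<noteq> ?c v" for u v by (rule proper)
      show "?c u = ?c v" if "u \<noteq> v" "\<not> E u v" "E u w" "E w v" for u v w
        using same_iff dist2[OF that] \<open>\<gamma> = \<alpha>\<close> by simp
    qed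
    show False using bipartite_or_complete_multipartite assms(4,5) by blast
  qed
qed

end
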